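(* Let $X=\{x_1,\dots,x_m\}$ and $Y=\{y_1,\dots,y_n\}$ be finite discrete spaces with $m,n>1$, and let $Z=X\circledast Y$. Then $\mathrm{TC}(Z)=n^2$ and $\mathrm{TC}(Z^{\mathrm{op}})=\mathrm{TC}(Y\circledast X)=m^2$.
   Context: Finite $T_0$ spaces are identified with finite posets (open sets are the down-closed sets; $z^\downarrow=\{w:w\le z\}$ is the minimal open neighborhood). The non-Hausdorff join $A\circledast B$ is $A\sqcup B$ with the orders of $A$ and $B$ kept and $a\le b$ for all $a\in A,b\in B$. $Z^{\mathrm{op}}$ is the finite space with the opposite order. Topological complexity is unreduced: $\mathrm{TC}(W)$ is the minimal $k$ such that $W\times W$ is covered by $k$ open sets each admitting a continuous section of $\pi:W^I\to W\times W$, $\gamma\mapsto(\gamma(0),\gamma(1))$, where $W^I$ carries the compact-open topology. *)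

theory Defs
  imports "HOL-Analysis.Analysis" "HOL-Library.Extended_Nat"
begin

text \<open>Finite T0 spaces as finite posets: the open sets are the down-closed subsets
  of the carrier C with respect to the order le.\<close>
definition poset_topology :: "'a set \<Rightarrow> ('a \<Rightarrow> 'a \<Rightarrow> bool) \<Rightarrow> 'a topology" where
  "poset_topology C le = topology (\<lambda>U. U \<subseteq> C \<and> (\<forall>x\<in>U. \<forall>y\<in>C. le y x \<longrightarrow> y \<in> U))"

lemma istopology_poset:
  "istopology (\<lambda>U. U \<subseteq> C \<and> (\<forall>x\<in>U. \<forall>y\<in>C. le y x \<longrightarrow> y \<in> U))"
  unfolding istopology_def by blast

lemma openin_poset_topology:
  "openin (poset_topology C le) U \<longleftrightarrow> U \<subseteq> C \<and> (\<forall>x\<in>U. \<forall>y\<in>C. le y x \<longrightarrow> y \<in> U)"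
  unfolding poset_topology_def using istopology_poset[of C le] by (simp add: topology_inverse')

definition join_le :: "('a \<Rightarrow> 'a \<Rightarrow> bool) \<Rightarrow> ('b \<Rightarrow> 'b \<Rightarrow> bool) \<Rightarrow> 'a + 'b \<Rightarrow> 'a + 'b \<Rightarrow> bool" where
  "join_le leA leB p q = (case (p, q) of
      (Inl a, Inl a') \<Rightarrow> leA a a'
    | (Inr b, Inr b') \<Rightarrow> leB b b'
    | (Inl _, Inr _) \<Rightarrow> True
    | (Inr _, Inl _) \<Rightarrow> False)"

definition discrete_join :: "'a set \<Rightarrow> 'b set \<Rightarrow> ('a + 'b) topology" where
  "discrete_join A B = poset_topology (A <+> B) (join_le (=) (=))"

definition discrete_join_op :: "'a set \<Rightarrow> 'b set \<Rightarrow> ('a + 'b) topology" where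
  "discrete_join_op A B = poset_topology (A <+> B) (\<lambda>p q. join_le (=) (=) q p)"

text \<open>Path space W^I with the compact-open topology. Paths are maps [0,1] -> W,
  made extensional (value undefined outside [0,1]). Subbasis: {g. g ` K \<subseteq> V},
  K compact in [0,1], V open in W.\<close>
definition paths :: "'a topology \<Rightarrow> (real \<Rightarrow> 'a) set" where
  "paths W = {g. pathin W g \<and> (\<forall>t. t \<notin> {0..1} \<longrightarrow> g t = undefined)}"

definition path_space :: "'a topology \<Rightarrow> (real \<Rightarrow> 'a) topology" where
  "path_space W = topology_generated_by
     {{g \<in> paths W. g ` K \<subseteq> V} | K V. compactin (top_of_set {0..1}) K \<and> openin W V}"

definition has_motion_planner :: "'a topology \<Rightarrow> ('a \<times> 'a) set \<Rightarrow> bool" where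
  "has_motion_planner W U \<longleftrightarrow>
     (\<exists>s. continuous_map (subtopology (prod_topology W W) U) (path_space W) s \<and>
          (\<forall>p\<in>U. s p 0 = fst p \<and> s p 1 = snd p))"

text \<open>Unreduced topological complexity (infinity if no finite cover exists).\<close>
definition TC :: "'a topology \<Rightarrow> enat" where
  "TC W = (INF k \<in> {k::nat. \<exists>U::nat \<Rightarrow> ('a \<times> 'a) set.
              (\<forall>i<k. openin (prod_topology W W) (U i) \<and> has_motion_planner W (U i)) \<and>
              topspace (prod_topology W W) \<subseteq> (\<Union>i<k. U i)}. enat k)"

end

theory Submission
  imports Defs
begin

text \<open>X \<circledast> Y, its opposite and Y \<circledast> X are bipartite posets: a discrete set L of
  minimal points below a discrete set H of maximal points, with |L| \<ge> 2. For y, y' in H the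
  open set of pairs below (y, y') has the motion planner a \<nearrow> y \<searrow> x \<nearrow> y' \<searrow> b, and these
  |H|^2 sets cover. Conversely, a motion planner s on an open U is monotone in the endpoints.
  If U contained (y1, _) and (y2, _) with y1 \<noteq> y2, the paths s(x1, x1), s(x2, x1), s(y1, x1),
  s(y2, x1) would form a crown g, g' \<le> h, h' at every time; the crown x1, x2 < y1, y2 is both
  maximal and minimal among crowns, so the times at which it is attained form a clopen subset
  of [0,1] containing 0, hence also 1, contradicting s(x2, x1)(1) = x1. So every such U contains
  at most one pair of maximal points, and at least |H|^2 sets are needed.\<close>

definition down_set :: "'a set \<Rightarrow> ('a \<Rightarrow> 'a \<Rightarrow> bool) \<Rightarrow> 'a \<Rightarrow> 'a set" where
  "down_set C le z = {w \<in> C. le w z}"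

definition up_set :: "'a set \<Rightarrow> ('a \<Rightarrow> 'a \<Rightarrow> bool) \<Rightarrow> 'a \<Rightarrow> 'a set" where
  "up_set C le z = {w \<in> C. le z w}"

lemma topspace_poset_topology [simp]: "topspace (poset_topology C le) = C"
  by (metis (no_types, lifting) openin_poset_topology openin_subset openin_topspace subset_antisym subset_iff)

lemma openin_poset_topology_down_closed:
  "openin (poset_topology C le) V \<Longrightarrow> x \<in> V \<Longrightarrow> y \<in> C \<Longrightarrow> le y x \<Longrightarrow> y \<in> V"
  by (auto simp: openin_poset_topology)

lemma openin_down_set:
  "transp_on C le \<Longrightarrow> z \<in> C \<Longrightarrow> openin (poset_topology C le) (down_set C le z)"
  unfolding openin_poset_topology down_set_def transp_on_def by blast

lemma closedin_up_set:
  assumes "transp_on C le" "z \<in> C"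
  shows "closedin (poset_topology C le) (up_set C le z)"
proof -
  have "y \<notin> up_set C le z" if "x \<in> C" "x \<notin> up_set C le z" "y \<in> C" "le y x" for x y
    using that assms unfolding up_set_def transp_on_def by blast
  then have "openin (poset_topology C le) (C - up_set C le z)"
    unfolding openin_poset_topology by blast
  then show ?thesis
    unfolding closedin_def up_set_def by auto
qed

lemma openin_prod_poset_topology_down_closed:
  assumes "openin (prod_topology (poset_topology C le) (poset_topology D le')) S"
    and "(a, b) \<in> S" "a' \<in> C" "b' \<in> D" "le a' a" "le' b' b"
  shows "(a', b') \<in> S"
proof -
  obtain U V where UV: "openin (poset_topology C le) U" "openin (poset_topology D le') V"
    "a \<in> U" "b \<in> V" "U \<times> V \<subseteq> S"
    using openin_prod_topology_alt[THEN iffD1, OF assms(1), rule_format, OF assms(2)] by blast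
  have "a' \<in> U"
    using openin_poset_topology_down_closed[OF UV(1,3)] assms(3,5) .
  moreover have "b' \<in> V"
    using openin_poset_topology_down_closed[OF UV(2,4)] assms(4,6) .
  ultimately show ?thesis
    using UV(5) by blast
qed

text \<open>Continuous maps preserve the specialisation preorder; in a poset space it is the given order.\<close>
lemma continuous_map_poset_topology_mono:
  assumes f: "continuous_map T (poset_topology C le) f"
    and order: "reflp_on C le" "transp_on C le"
    and y: "y \<in> topspace T" and spec: "\<And>N. openin T N \<Longrightarrow> y \<in> N \<Longrightarrow> x \<in> N"
  shows "le (f x) (f y)"
proof -
  have "f y \<in> C"
    using f y by (auto simp: continuous_map_def)
  then have "y \<in> {p \<in> topspace T. f p \<in> down_set C le (f y)}"
    using y order(1) by (simp add: down_set_def reflp_on_def)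
  moreover have "openin T {p \<in> topspace T. f p \<in> down_set C le (f y)}"
    using f openin_down_set[OF order(2) \<open>f y \<in> C\<close>] by (rule openin_continuous_map_preimage)
  ultimately show ?thesis
    using spec by (auto simp: down_set_def)
qed

lemma pathin_poset_topologyI:
  assumes "g ` {0..1} \<subseteq> C"
    and "\<And>t. t \<in> {0..1} \<Longrightarrow> \<exists>e>0. \<forall>s\<in>{0..1}. dist s t < e \<longrightarrow> le (g s) (g t)"
  shows "pathin (poset_topology C le) g"
  unfolding pathin_def continuous_map_def
proof (intro conjI allI impI)
  show "g \<in> topspace (top_of_set {0..1}) \<rightarrow> topspace (poset_topology C le)"
    using assms(1) by auto
  fix V assume V: "openin (poset_topology C le) V"
  show "openin (top_of_set {0..1}) {t \<in> topspace (top_of_set {0..1}). g t \<in> V}"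
    unfolding openin_euclidean_subtopology_iff
  proof (intro conjI ballI)
    fix t assume "t \<in> {t \<in> topspace (top_of_set {0..1}). g t \<in> V}"
    then show "\<exists>e>0. \<forall>s\<in>{0..1}. dist s t < e \<longrightarrow> s \<in> {t \<in> topspace (top_of_set {0..1}). g t \<in> V}"
      using assms openin_poset_topology_down_closed[OF V] by (force simp: image_subset_iff)
  qed auto
qed

lemma paths_in_topspace: "g \<in> paths W \<Longrightarrow> t \<in> {0..1} \<Longrightarrow> g t \<in> topspace W"
  unfolding paths_def pathin_def using continuous_map_image_subset_topspace by fastforce

lemma topspace_path_space [simp]: "topspace (path_space W) = paths W"
proof -
  have "paths W = {g \<in> paths W. g ` {} \<subseteq> {}}"
    by simp
  then have "paths W \<in> {{g \<in> paths W. g ` K \<subseteq> V} | K V. compactin (top_of_set {0..1}) K \<and> openin W V}"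
    by fastforce
  then show ?thesis
    unfolding path_space_def topology_generated_by_topspace by blast
qed

lemma continuous_map_path_eval:
  assumes t: "t \<in> {0..1}"
  shows "continuous_map (path_space W) W (\<lambda>g. g t)"
  unfolding continuous_map_def
proof (intro conjI allI impI)
  show "(\<lambda>g. g t) \<in> topspace (path_space W) \<rightarrow> topspace W"
    using paths_in_topspace[OF _ t] by auto
  fix V assume "openin W V"
  moreover have "compactin (top_of_set {0..1}) {t}"
    using t by simp
  ultimately have "{g \<in> paths W. g ` {t} \<subseteq> V}
      \<in> {{g \<in> paths W. g ` K \<subseteq> V} | K V. compactin (top_of_set {0..1}) K \<and> openin W V}"
    by blast
  then have "openin (path_space W) {g \<in> paths W. g ` {t} \<subseteq> V}"
    unfolding path_space_def by (rule topology_generated_by_Basis)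
  then show "openin (path_space W) {g \<in> topspace (path_space W). g t \<in> V}"
    by simp
qed

text \<open>Every subbasic open set of the compact-open topology is down-closed for the pointwise order.\<close>
lemma continuous_map_into_path_space_poset:
  assumes paths: "\<And>p. p \<in> topspace T \<Longrightarrow> s p \<in> paths (poset_topology C le)"
    and mono: "\<And>p. p \<in> topspace T \<Longrightarrow> \<exists>N. openin T N \<and> p \<in> N \<and>
                  (\<forall>q\<in>N. \<forall>t\<in>{0..1}. le (s q t) (s p t))"
  shows "continuous_map T (path_space (poset_topology C le)) s"
proof -
  let ?W = "poset_topology C le"
  let ?S = "{{g \<in> paths ?W. g ` K \<subseteq> V} | K V. compactin (top_of_set {0..1}) K \<and> openin ?W V}"
  have preimage_open: "openin T {p \<in> topspace T. s p \<in> {g \<in> paths ?W. g ` K \<subseteq> V}}"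
    if K: "compactin (top_of_set {0..1}) K" and V: "openin ?W V" for K V
  proof -
    define P where "P = {p \<in> topspace T. s p \<in> {g \<in> paths ?W. g ` K \<subseteq> V}}"
    have down_closed: "q \<in> P"
      if p: "p \<in> P" and N: "openin T N" "\<forall>q\<in>N. \<forall>t\<in>{0..1}. le (s q t) (s p t)"
        and q: "q \<in> N" for p N q
    proof -
      have q_top: "q \<in> topspace T"
        using openin_subset[OF N(1)] q by blast
      have "s q t \<in> V" if t: "t \<in> K" for t
      proof -
        have t01: "t \<in> {0..1}"
          using compactin_subset_topspace[OF K] t by auto
        have "s p t \<in> V"
          using p t by (simp add: P_def image_subset_iff)
        moreover have "s q t \<in> C"
          using paths_in_topspace[OF paths[OF q_top] t01] by simp
        moreover have "le (s q t) (s p t)"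
          using N(2) q t01 by blast
        ultimately show ?thesis
          by (rule openin_poset_topology_down_closed[OF V])
      qed
      with q_top paths[OF q_top] show ?thesis
        by (simp add: P_def image_subset_iff)
    qed
    have "\<exists>N. openin T N \<and> p \<in> N \<and> N \<subseteq> P" if p: "p \<in> P" for p
    proof -
      have "p \<in> topspace T"
        using p by (simp add: P_def)
      then obtain N where N: "openin T N" "p \<in> N" "\<forall>q\<in>N. \<forall>t\<in>{0..1}. le (s q t) (s p t)"
        using mono by blast
      then have "N \<subseteq> P"
        using down_closed[OF p N(1,3)] by blast
      with N(1,2) show ?thesis
        by blast
    qed
    then show ?thesis
      unfolding P_def[symmetric] by (subst openin_subopen) blast
  qed
  show ?thesis
    unfolding path_space_def
  proof (rule continuous_on_generated_topo)
    fix U assume "U \<in> ?S"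
    then obtain K V where "U = {g \<in> paths ?W. g ` K \<subseteq> V}"
      "compactin (top_of_set {0..1}) K" "openin ?W V"
      by blast
    moreover have "s -` U \<inter> topspace T = {p \<in> topspace T. s p \<in> U}"
      by blast
    ultimately show "openin T (s -` U \<inter> topspace T)"
      using preimage_open by simp
  next
    have "\<Union> ?S = paths ?W"
      using topspace_path_space[of ?W] unfolding path_space_def by simp
    then show "s ` topspace T \<subseteq> \<Union> ?S"
      using paths by blast
  qed
qed

lemma continuous_map_path_space_mono:
  fixes C and le and W
  defines "W \<equiv> poset_topology C le"
  assumes s: "continuous_map (subtopology (prod_topology W W) U) (path_space W) s"
    and order: "reflp_on C le" "transp_on C le"
    and U: "openin (prod_topology W W) U" "(a, b) \<in> U"
    and below: "a' \<in> C" "b' \<in> C" "le a' a" "le b' b" and t: "t \<in> {0..1}"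
  shows "le (s (a', b') t) (s (a, b) t)"
proof (rule continuous_map_poset_topology_mono[where f = "\<lambda>p. s p t", OF _ order])
  show "continuous_map (subtopology (prod_topology W W) U) (poset_topology C le) (\<lambda>p. s p t)"
    using continuous_map_compose[OF s continuous_map_path_eval[OF t]] by (simp add: o_def W_def)
  show "(a, b) \<in> topspace (subtopology (prod_topology W W) U)"
    using openin_subset[OF U(1)] U(2) by auto
  fix N assume "openin (subtopology (prod_topology W W) U) N" "(a, b) \<in> N"
  then obtain N' where N': "openin (prod_topology W W) N'" "N = N' \<inter> U" "(a, b) \<in> N'"
    by (auto simp: openin_subtopology)
  have "(a', b') \<in> N'"
    using openin_prod_poset_topology_down_closed[OF N'(1)[unfolded W_def] N'(3) below] .
  moreover have "(a', b') \<in> U"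
    using openin_prod_poset_topology_down_closed[OF U(1)[unfolded W_def] U(2) below] .
  ultimately show "(a', b') \<in> N"
    using N'(2) by blast
qed

definition zigzag_path :: "'a \<Rightarrow> 'a \<Rightarrow> 'a \<Rightarrow> 'a \<Rightarrow> 'a \<Rightarrow> real \<Rightarrow> 'a" where
  "zigzag_path a y x y' b t =
     (if t \<notin> {0..1} then undefined
      else if t < 1/4 then a else if t = 1/4 then y
      else if t < 3/4 then x else if t = 3/4 then y' else b)"

lemma zigzag_path_in_paths:
  assumes C: "a \<in> C" "y \<in> C" "x \<in> C" "y' \<in> C" "b \<in> C" and order: "reflp_on C le"
    and zigzag: "le a y" "le x y" "le x y'" "le b y'"
  shows "zigzag_path a y x y' b \<in> paths (poset_topology C le)"
proof -
  let ?g = "zigzag_path a y x y' b"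
  have local_below: "\<exists>e>0. \<forall>s\<in>{0..1}. dist s t < e \<longrightarrow> le (?g s) (?g t)" if t: "t \<in> {0..1}" for t
  proof -
    have reflexive: "le c c" if "c \<in> C" for c
      using order that by (simp add: reflp_on_def)
    consider "t < 1/4" | "t = 1/4" | "1/4 < t" "t < 3/4" | "t = 3/4" | "3/4 < t" by linarith
    then show ?thesis
    proof cases
      case 1
      show ?thesis
        by (rule exI[of _ "1/4 - t"]) (use 1 t C reflexive in \<open>auto simp: zigzag_path_def dist_real_def\<close>)
    next
      case 2
      show ?thesis
        by (rule exI[of _ "1/2"]) (use 2 t C reflexive zigzag in \<open>auto simp: zigzag_path_def dist_real_def\<close>)
    next
      case 3
      show ?thesis
        by (rule exI[of _ "min (t - 1/4) (3/4 - t)"]) (use 3 t C reflexive in \<open>auto simp: zigzag_path_def dist_real_def\<close>)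
    next
      case 4
      show ?thesis
        by (rule exI[of _ "1/2"]) (use 4 t C reflexive zigzag in \<open>auto simp: zigzag_path_def dist_real_def\<close>)
    next
      case 5
      show ?thesis
        by (rule exI[of _ "t - 3/4"]) (use 5 t C reflexive in \<open>auto simp: zigzag_path_def dist_real_def\<close>)
    qed
  qed
  have "?g ` {0..1} \<subseteq> C"
    using C by (auto simp: zigzag_path_def)
  then have "pathin (poset_topology C le) ?g"
    using local_below by (rule pathin_poset_topologyI)
  then show ?thesis
    unfolding paths_def by (simp add: zigzag_path_def)
qed

lemma zigzag_path_mono:
  assumes "le a' a" "le b' b" "le y y" "le x x" "le y' y'" "t \<in> {0..1}"
  shows "le (zigzag_path a' y x y' b' t) (zigzag_path a y x y' b t)"
  using assms by (simp add: zigzag_path_def)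

lemma down_set_subset:
  "transp_on C le \<Longrightarrow> y \<in> C \<Longrightarrow> a \<in> down_set C le y \<Longrightarrow> down_set C le a \<subseteq> down_set C le y"
  unfolding down_set_def transp_on_def by blast

lemma has_motion_planner_down_sets:
  assumes order: "reflp_on C le" "transp_on C le"
    and C: "x \<in> C" "y \<in> C" "y' \<in> C" and below: "le x y" "le x y'"
  shows "has_motion_planner (poset_topology C le) (down_set C le y \<times> down_set C le y')"
proof -
  let ?W = "poset_topology C le"
  let ?U = "down_set C le y \<times> down_set C le y'"
  define s where "s = (\<lambda>(a, b). zigzag_path a y x y' b)"
  have reflexive: "le c c" if "c \<in> C" for c
    using order(1) that by (simp add: reflp_on_def)
  have U: "openin (prod_topology ?W ?W) ?U"
    using order C by (simp add: openin_prod_Times_iff openin_down_set)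
  then have topU: "topspace (subtopology (prod_topology ?W ?W) ?U) = ?U"
    by (intro topspace_subtopology_subset openin_subset)
  have "continuous_map (subtopology (prod_topology ?W ?W) ?U) (path_space ?W) s"
  proof (rule continuous_map_into_path_space_poset, unfold topU)
    fix p assume "p \<in> ?U"
    then obtain a b where "p = (a, b)" "a \<in> C" "b \<in> C" "le a y" "le b y'"
      by (auto simp: down_set_def)
    then show "s p \<in> paths ?W"
      using order(1) C below by (simp add: s_def zigzag_path_in_paths)
  next
    fix p assume p: "p \<in> ?U"
    then obtain a b where ab: "p = (a, b)" "a \<in> down_set C le y" "b \<in> down_set C le y'"
      by blast
    then have "a \<in> C" "b \<in> C"
      by (simp_all add: down_set_def)
    let ?N = "down_set C le a \<times> down_set C le b"
    have "?N \<subseteq> ?U"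
      using down_set_subset[OF order(2)] ab C by blast
    moreover have "openin (prod_topology ?W ?W) ?N"
      using order \<open>a \<in> C\<close> \<open>b \<in> C\<close> by (simp add: openin_prod_Times_iff openin_down_set)
    ultimately have "openin (subtopology (prod_topology ?W ?W) ?U) ?N"
      using U by (simp add: openin_open_subtopology)
    moreover have "p \<in> ?N"
      using ab reflexive by (simp add: down_set_def)
    moreover have "\<forall>q\<in>?N. \<forall>t\<in>{0..1}. le (s q t) (s p t)"
      using ab reflexive C by (auto simp: s_def down_set_def intro: zigzag_path_mono)
    ultimately show "\<exists>N. openin (subtopology (prod_topology ?W ?W) ?U) N \<and> p \<in> N \<and>
                      (\<forall>q\<in>N. \<forall>t\<in>{0..1}. le (s q t) (s p t))"
      by blast
  qed
  moreover have "\<forall>p\<in>?U. s p 0 = fst p \<and> s p 1 = snd p"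
    by (auto simp: s_def zigzag_path_def)
  ultimately show ?thesis
    unfolding has_motion_planner_def by blast
qed

lemma TC_le_card:
  assumes "finite I"
    and "\<And>i. i \<in> I \<Longrightarrow> openin (prod_topology W W) (U i) \<and> has_motion_planner W (U i)"
    and "topspace (prod_topology W W) \<subseteq> (\<Union>i\<in>I. U i)"
  shows "TC W \<le> enat (card I)"
proof -
  obtain e where e: "bij_betw e {..<card I} I"
    using ex_bij_betw_nat_finite[OF assms(1)] by (auto simp: lessThan_atLeast0)
  have "\<forall>i<card I. openin (prod_topology W W) (U (e i)) \<and> has_motion_planner W (U (e i))"
    using assms(2) bij_betwE[OF e] by blast
  moreover have "topspace (prod_topology W W) \<subseteq> (\<Union>i<card I. U (e i))"
  proof
    fix p assume "p \<in> topspace (prod_topology W W)"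
    then obtain j where j: "j \<in> I" "p \<in> U j"
      using assms(3) by blast
    then obtain i where "i < card I" "e i = j"
      using bij_betw_imp_surj_on[OF e] by (metis imageE lessThan_iff)
    with j show "p \<in> (\<Union>i<card I. U (e i))"
      by blast
  qed
  ultimately have "card I \<in> {k. \<exists>U. (\<forall>i<k. openin (prod_topology W W) (U i) \<and> has_motion_planner W (U i)) \<and>
                                topspace (prod_topology W W) \<subseteq> (\<Union>i<k. U i)}"
    by (intro CollectI exI[of _ "\<lambda>i. U (e i)"] conjI)
  then show ?thesis
    unfolding TC_def by (rule INF_lower)
qed

lemma card_le_TC:
  assumes "finite S" "S \<subseteq> topspace (prod_topology W W)"
    and one: "\<And>U p q. openin (prod_topology W W) U \<Longrightarrow> has_motion_planner W U \<Longrightarrow>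
                p \<in> S \<Longrightarrow> q \<in> S \<Longrightarrow> p \<in> U \<Longrightarrow> q \<in> U \<Longrightarrow> p = q"
  shows "enat (card S) \<le> TC W"
  unfolding TC_def
proof (rule INF_greatest, clarify)
  fix k and U :: "nat \<Rightarrow> _"
  assume U: "\<forall>i<k. openin (prod_topology W W) (U i) \<and> has_motion_planner W (U i)"
    and cover: "topspace (prod_topology W W) \<subseteq> (\<Union>i<k. U i)"
  have "card (U i \<inter> S) \<le> Suc 0" if "i < k" for i
  proof (subst card_le_Suc0_iff_eq)
    show "finite (U i \<inter> S)"
      using assms(1) by simp
    show "\<forall>p\<in>U i \<inter> S. \<forall>q\<in>U i \<inter> S. p = q"
      using U that one by blast
  qed
  then have "card (\<Union>i<k. U i \<inter> S) \<le> k"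
    using card_UN_le[of "{..<k}" "\<lambda>i. U i \<inter> S"] sum_bounded_above[of "{..<k}" "\<lambda>i. card (U i \<inter> S)" "Suc 0"]
    by simp
  moreover have "S = (\<Union>i<k. U i \<inter> S)"
    using assms(2) cover by blast
  ultimately show "enat (card S) \<le> enat k"
    by simp
qed

definition bipartite_le :: "'a set \<Rightarrow> 'a set \<Rightarrow> 'a \<Rightarrow> 'a \<Rightarrow> bool" where
  "bipartite_le L H p q \<longleftrightarrow> p = q \<or> (p \<in> L \<and> q \<in> H)"

abbreviation bipartite_space :: "'a set \<Rightarrow> 'a set \<Rightarrow> 'a topology" where
  "bipartite_space L H \<equiv> poset_topology (L \<union> H) (bipartite_le L H)"

lemma reflp_on_bipartite_le: "reflp_on C (bipartite_le L H)"
  by (simp add: reflp_on_def bipartite_le_def)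

lemma transp_on_bipartite_le: "L \<inter> H = {} \<Longrightarrow> transp_on C (bipartite_le L H)"
  by (auto simp: transp_on_def bipartite_le_def)

lemma bipartite_crown_extremal:
  fixes L H and le (infix "\<preceq>" 50)
  defines "le \<equiv> bipartite_le L H"
  assumes LH: "L \<inter> H = {}" and x: "x \<in> L" "x' \<in> L" "x \<noteq> x'" and y: "y \<in> H" "y' \<in> H" "y \<noteq> y'"
    and crown: "g \<preceq> h" "g \<preceq> h'" "g' \<preceq> h" "g' \<preceq> h'"
  shows "g \<preceq> x \<and> g' \<preceq> x' \<and> h \<preceq> y \<and> h' \<preceq> y' \<longleftrightarrow> (g, g', h, h') = (x, x', y, y')"
    and "x \<preceq> g \<and> x' \<preceq> g' \<and> y \<preceq> h \<and> y' \<preceq> h' \<longleftrightarrow> (g, g', h, h') = (x, x', y, y')"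
proof -
  have reflexive: "p \<preceq> p" for p
    by (simp add: le_def bipartite_le_def)
  have bot: "p = z" if "p \<preceq> z" "z \<in> L" for p z
    using that LH by (auto simp: le_def bipartite_le_def)
  have top: "p = z" if "z \<preceq> p" "z \<in> H" for p z
    using that LH by (auto simp: le_def bipartite_le_def)
  have strict: "p \<in> L \<and> q \<in> H" if "p \<preceq> q" "p \<noteq> q" for p q
    using that by (auto simp: le_def bipartite_le_def)
  show "g \<preceq> x \<and> g' \<preceq> x' \<and> h \<preceq> y \<and> h' \<preceq> y' \<longleftrightarrow> (g, g', h, h') = (x, x', y, y')"
  proof
    assume "g \<preceq> x \<and> g' \<preceq> x' \<and> h \<preceq> y \<and> h' \<preceq> y'"
    then have lower: "g = x" "g' = x'" and upper: "h \<preceq> y" "h' \<preceq> y'"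
      using bot x by blast+
    have "k = z" if "k \<preceq> z" "g \<preceq> k" "g' \<preceq> k" for k z
    proof (rule ccontr)
      assume "k \<noteq> z"
      then have "k \<in> L"
        using strict that(1) by blast
      then show False
        using bot that(2,3) lower x(3) by blast
    qed
    then show "(g, g', h, h') = (x, x', y, y')"
      using upper crown lower by simp
  qed (simp add: reflexive)
  show "x \<preceq> g \<and> x' \<preceq> g' \<and> y \<preceq> h \<and> y' \<preceq> h' \<longleftrightarrow> (g, g', h, h') = (x, x', y, y')"
  proof
    assume "x \<preceq> g \<and> x' \<preceq> g' \<and> y \<preceq> h \<and> y' \<preceq> h'"
    then have upper: "h = y" "h' = y'" and lower: "x \<preceq> g" "x' \<preceq> g'"
      using top y by blast+
    have "k = z" if "z \<preceq> k" "k \<preceq> h" "k \<preceq> h'" for k z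
    proof (rule ccontr)
      assume "k \<noteq> z"
      then have "k \<in> H"
        using strict that(1) by blast
      then show False
        using top that(2,3) upper y(3) by blast
    qed
    then show "(g, g', h, h') = (x, x', y, y')"
      using upper crown lower by simp
  qed (simp add: reflexive)
qed

lemma bipartite_crown_path_constant:
  fixes L H :: "'a set" and le (infix "\<preceq>" 50)
  defines "le \<equiv> bipartite_le L H"
  assumes LH: "L \<inter> H = {}" and x: "x \<in> L" "x' \<in> L" "x \<noteq> x'" and y: "y \<in> H" "y' \<in> H" "y \<noteq> y'"
    and paths: "pathin (bipartite_space L H) g" "pathin (bipartite_space L H) g'"
      "pathin (bipartite_space L H) h" "pathin (bipartite_space L H) h'"
    and crown: "\<And>t. t \<in> {0..1} \<Longrightarrow> g t \<preceq> h t" "\<And>t. t \<in> {0..1} \<Longrightarrow> g t \<preceq> h' t"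
      "\<And>t. t \<in> {0..1} \<Longrightarrow> g' t \<preceq> h t" "\<And>t. t \<in> {0..1} \<Longrightarrow> g' t \<preceq> h' t"
    and r: "r \<in> {0..1}" "(g r, g' r, h r, h' r) = (x, x', y, y')"
    and t: "t \<in> {0..1}"
  shows "(g t, g' t, h t, h' t) = (x, x', y, y')"
proof -
  let ?W = "bipartite_space L H" and ?C = "L \<union> H"
  let ?down = "down_set ?C (\<preceq>)" and ?up = "up_set ?C (\<preceq>)"
  have tr: "transp_on ?C (\<preceq>)"
    unfolding le_def using LH by (rule transp_on_bipartite_le)
  have inC: "k s \<in> ?C" if "pathin ?W k" "s \<in> {0..1}" for k s
    using path_image_subset_topspace[OF that(1)] that(2) by auto
  have down_iff: "g s \<in> ?down x \<and> g' s \<in> ?down x' \<and> h s \<in> ?down y \<and> h' s \<in> ?down y' \<longleftrightarrow>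
                  (g s, g' s, h s, h' s) = (x, x', y, y')"
    and up_iff: "g s \<in> ?up x \<and> g' s \<in> ?up x' \<and> h s \<in> ?up y \<and> h' s \<in> ?up y' \<longleftrightarrow>
                  (g s, g' s, h s, h' s) = (x, x', y, y')"
    if s: "s \<in> {0..1}" for s
    using bipartite_crown_extremal[OF LH x y crown[OF s, unfolded le_def], folded le_def]
      inC[OF paths(1) s] inC[OF paths(2) s] inC[OF paths(3) s] inC[OF paths(4) s]
    by (simp_all add: down_set_def up_set_def)
  have open_pre: "openin (top_of_set {0..1}) {s \<in> {0..1}. k s \<in> ?down z}"
    if "pathin ?W k" "z \<in> ?C" for k z
    using openin_continuous_map_preimage[OF that(1)[unfolded pathin_def]
        openin_down_set[OF tr that(2), unfolded le_def]]
    by (simp add: le_def)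
  have closed_pre: "closedin (top_of_set {0..1}) {s \<in> {0..1}. k s \<in> ?up z}"
    if "pathin ?W k" "z \<in> ?C" for k z
    using closedin_continuous_map_preimage[OF that(1)[unfolded pathin_def]
        closedin_up_set[OF tr that(2), unfolded le_def]]
    by (simp add: le_def)
  define A where "A = {s \<in> {0..1}. (g s, g' s, h s, h' s) = (x, x', y, y')}"
  have "A = {s \<in> {0..1}. g s \<in> ?down x} \<inter> {s \<in> {0..1}. g' s \<in> ?down x'} \<inter>
            {s \<in> {0..1}. h s \<in> ?down y} \<inter> {s \<in> {0..1}. h' s \<in> ?down y'}"
    unfolding A_def using down_iff by blast
  then have "openin (top_of_set {0..1}) A"
    using open_pre paths x y by (simp add: openin_Int)
  moreover have "A = {s \<in> {0..1}. g s \<in> ?up x} \<inter> {s \<in> {0..1}. g' s \<in> ?up x'} \<inter>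
                     {s \<in> {0..1}. h s \<in> ?up y} \<inter> {s \<in> {0..1}. h' s \<in> ?up y'}"
    unfolding A_def using up_iff by blast
  then have "closedin (top_of_set {0..1}) A"
    using closed_pre paths x y by (simp add: closedin_Int)
  moreover have "r \<in> A"
    using r by (simp add: A_def)
  ultimately have "A = {0..1}"
    using connected_Icc[of "0::real" 1] unfolding connected_clopen by blast
  with t have "t \<in> A"
    by simp
  then show ?thesis
    by (simp add: A_def)
qed

lemma bipartite_motion_planner_top_pair_unique:
  fixes L H :: "'a set"
  assumes LH: "L \<inter> H = {}" and x: "x1 \<in> L" "x2 \<in> L" "x1 \<noteq> x2"
    and U: "openin (prod_topology (bipartite_space L H) (bipartite_space L H)) U"
      "has_motion_planner (bipartite_space L H) U"
    and pq: "p \<in> H \<times> H" "q \<in> H \<times> H" "p \<in> U" "q \<in> U"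
  shows "p = q"
proof (rule ccontr)
  let ?W = "bipartite_space L H" and ?C = "L \<union> H" and ?le = "bipartite_le L H"
  assume "p \<noteq> q"
  obtain s where s: "continuous_map (subtopology (prod_topology ?W ?W) U) (path_space ?W) s"
    and ends: "\<forall>u\<in>U. s u 0 = fst u \<and> s u 1 = snd u"
    using U(2) unfolding has_motion_planner_def by blast
  have down: "(a', b') \<in> U" if "(a, b) \<in> U" "a' \<in> ?C" "b' \<in> ?C" "?le a' a" "?le b' b" for a b a' b'
    using openin_prod_poset_topology_down_closed[OF U(1) that] .
  have mono: "?le (s (a', b') t) (s (a, b) t)"
    if "(a, b) \<in> U" "a' \<in> ?C" "b' \<in> ?C" "?le a' a" "?le b' b" "t \<in> {0..1}" for a b a' b' t
    using continuous_map_path_space_mono[OF s reflp_on_bipartite_le transp_on_bipartite_le[OF LH] U(1)]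
      that by blast
  have path: "pathin ?W (s u)" if "u \<in> U" for u
  proof -
    have "u \<in> topspace (subtopology (prod_topology ?W ?W) U)"
      using openin_subset[OF U(1)] that by auto
    then have "s u \<in> paths ?W"
      using s by (auto simp: continuous_map_def)
    then show ?thesis
      by (simp add: paths_def)
  qed
  have LH_le: "?le a b" if "a \<in> L" "b \<in> H" for a b
    using that by (simp add: bipartite_le_def)
  obtain y1 y1' y2 y2' where p: "p = (y1, y1')" and q: "q = (y2, y2')"
    and y: "y1 \<in> H" "y1' \<in> H" "y2 \<in> H" "y2' \<in> H"
    using pq by auto
  consider "y1 \<noteq> y2" | "y1' \<noteq> y2'"
    using \<open>p \<noteq> q\<close> p q by auto
  then show False
  proof cases
    case 1
    have inU: "(x1, x1) \<in> U" "(x2, x1) \<in> U" "(y1, x1) \<in> U" "(y2, x1) \<in> U"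
      using down pq p q x y LH_le by (auto simp: bipartite_le_def)
    have crown: "?le (s (a, x1) t) (s (b, x1) t)" if "a \<in> {x1, x2}" "b \<in> {y1, y2}" "t \<in> {0..1}" for a b t
      by (rule mono) (use that inU x y in \<open>auto simp: bipartite_le_def\<close>)
    have "(s (x1, x1) 1, s (x2, x1) 1, s (y1, x1) 1, s (y2, x1) 1) = (x1, x2, y1, y2)"
      by (rule bipartite_crown_path_constant[where g = "s (x1, x1)" and g' = "s (x2, x1)" and
            h = "s (y1, x1)" and h' = "s (y2, x1)" and r = 0, OF LH x y(1,3) 1])
        (use crown path inU ends in auto)
    then show False
      using ends inU(2) x(3) by auto
  next
    case 2
    have inU: "(x1, x1) \<in> U" "(x1, x2) \<in> U" "(x1, y1') \<in> U" "(x1, y2') \<in> U"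
      using down pq p q x y LH_le by (auto simp: bipartite_le_def)
    have crown: "?le (s (x1, a) t) (s (x1, b) t)" if "a \<in> {x1, x2}" "b \<in> {y1', y2'}" "t \<in> {0..1}" for a b t
      by (rule mono) (use that inU x y in \<open>auto simp: bipartite_le_def\<close>)
    have "(s (x1, x1) 0, s (x1, x2) 0, s (x1, y1') 0, s (x1, y2') 0) = (x1, x2, y1', y2')"
      by (rule bipartite_crown_path_constant[where g = "s (x1, x1)" and g' = "s (x1, x2)" and
            h = "s (x1, y1')" and h' = "s (x1, y2')" and r = 1, OF LH x y(2,4) 2])
        (use crown path inU ends in auto)
    then show False
      using ends inU(2) x(3) by auto
  qed
qed

lemma TC_bipartite_space:
  assumes LH: "L \<inter> H = {}" and L: "1 < card L" and H: "finite H" "H \<noteq> {}"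
  shows "TC (bipartite_space L H) = enat (card H ^ 2)"
proof -
  let ?W = "bipartite_space L H" and ?C = "L \<union> H" and ?le = "bipartite_le L H"
  let ?U = "\<lambda>(y, y'). down_set ?C ?le y \<times> down_set ?C ?le y'"
  have tr: "transp_on ?C ?le"
    using LH by (rule transp_on_bipartite_le)
  have "finite L"
    using L card.infinite by fastforce
  then have "\<not> (\<forall>a\<in>L. \<forall>b\<in>L. a = b)"
    using L card_le_Suc0_iff_eq by fastforce
  then obtain x1 x2 where x: "x1 \<in> L" "x2 \<in> L" "x1 \<noteq> x2"
    by blast
  obtain y0 where y0: "y0 \<in> H"
    using H by blast
  have "TC ?W \<le> enat (card (H \<times> H))"
  proof (rule TC_le_card)
    fix i assume "i \<in> H \<times> H"
    then obtain y y' where i: "i = (y, y')" "y \<in> H" "y' \<in> H"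
      by blast
    have "openin (prod_topology ?W ?W) (down_set ?C ?le y \<times> down_set ?C ?le y')"
      using openin_down_set[OF tr] i by (simp add: openin_prod_Times_iff)
    moreover have "has_motion_planner ?W (down_set ?C ?le y \<times> down_set ?C ?le y')"
      by (rule has_motion_planner_down_sets[OF reflp_on_bipartite_le tr, of x1])
        (use x i LH in \<open>auto simp: bipartite_le_def\<close>)
    ultimately show "openin (prod_topology ?W ?W) (?U i) \<and> has_motion_planner ?W (?U i)"
      using i by simp
  next
    show "topspace (prod_topology ?W ?W) \<subseteq> (\<Union>i\<in>H \<times> H. ?U i)"
    proof
      fix p assume "p \<in> topspace (prod_topology ?W ?W)"
      then obtain a b where p: "p = (a, b)" "a \<in> ?C" "b \<in> ?C"
        by auto
      let ?top = "\<lambda>z. if z \<in> H then z else y0"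
      have "(?top a, ?top b) \<in> H \<times> H"
        using y0 by simp
      moreover have "p \<in> ?U (?top a, ?top b)"
        using p y0 by (auto simp: down_set_def bipartite_le_def)
      ultimately show "p \<in> (\<Union>i\<in>H \<times> H. ?U i)"
        by blast
    qed
  qed (use H in simp)
  moreover have "enat (card (H \<times> H)) \<le> TC ?W"
  proof (rule card_le_TC)
    show "p = q" if "openin (prod_topology ?W ?W) U" "has_motion_planner ?W U"
      "p \<in> H \<times> H" "q \<in> H \<times> H" "p \<in> U" "q \<in> U" for U p q
      using bipartite_motion_planner_top_pair_unique[OF LH x that] .
  qed (use H in auto)
  ultimately show ?thesis
    using H by (simp add: card_cartesian_product power2_eq_square)
qed

lemma poset_topology_cong:
  "(\<And>p q. p \<in> C \<Longrightarrow> q \<in> C \<Longrightarrow> le p q = le' p q) \<Longrightarrow> poset_topology C le = poset_topology C le'"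
  unfolding topology_eq openin_poset_topology by blast

lemma discrete_join_eq_bipartite_space:
  "discrete_join A B = bipartite_space (Inl ` A) (Inr ` B)"
  unfolding discrete_join_def Plus_def
  by (rule poset_topology_cong) (auto simp: join_le_def bipartite_le_def)

lemma discrete_join_op_eq_bipartite_space:
  "discrete_join_op A B = bipartite_space (Inr ` B) (Inl ` A)"
  unfolding discrete_join_op_def Plus_def Un_commute[of "Inl ` A"]
  by (rule poset_topology_cong) (auto simp: join_le_def bipartite_le_def)

lemma TC_discrete_join:
  assumes "1 < card A" "finite B" "B \<noteq> {}"
  shows "TC (discrete_join A B) = enat (card B ^ 2)"
  using TC_bipartite_space[of "Inl ` A" "Inr ` B"] assms
  by (auto simp: discrete_join_eq_bipartite_space card_image)

lemma TC_discrete_join_op: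
  assumes "finite A" "A \<noteq> {}" "1 < card B"
  shows "TC (discrete_join_op A B) = enat (card A ^ 2)"
  using TC_bipartite_space[of "Inr ` B" "Inl ` A"] assms
  by (auto simp: discrete_join_op_eq_bipartite_space card_image)

theorem theorem3:
  fixes X :: "'a set" and Y :: "'b set" and m n :: nat
  assumes "finite X" "card X = m" "m > 1"
      and "finite Y" "card Y = n" "n > 1"
  shows "TC (discrete_join X Y) = enat (n ^ 2)
       \<and> TC (discrete_join_op X Y) = enat (m ^ 2)
       \<and> TC (discrete_join Y X) = enat (m ^ 2)"
proof -
  have X: "finite X" "X \<noteq> {}" "1 < card X" and Y: "finite Y" "Y \<noteq> {}" "1 < card Y"
    using assms by auto
  show ?thesis
    using TC_discrete_join[OF X(3) Y(1,2)] TC_discrete_join[OF Y(3) X(1,2)]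
      TC_discrete_join_op[OF X(1,2) Y(3)] assms(2,5)
    by simp
qed

end
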